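(* Assume (A1)–(A3) below, and let $\mathbf{a}_\star$ be the unique solution of $\mathrm{VI}(\mathbb{A},\mathbb{F})$. Let $\mathbb{F}^{\mathrm{nor}}=\mathbb{F}\circ P_{\mathbb{A}}+\mathrm{Id}-P_{\mathbb{A}}$ be the normal map, and $\tilde{\mathbf{a}}_\star=\mathbf{a}_\star-\mathbb{F}(\mathbf{a}_\star)$. Then the index of $\mathbb{F}^{\mathrm{nor}}$ at $\tilde{\mathbf{a}}_\star$ equals $1$: $\operatorname{ind}(\mathbb{F}^{\mathrm{nor}},\tilde{\mathbf{a}}_\star)=1$.
   Context: Setting. $(\Omega,\mathcal{F},\mathbb{P})$ is a probability space; $N,d\in\mathbb{N}_+$, $R>0$, $\lambda>0$. $\mathcal{X}\subseteq\mathbb{R}^{n_x}$, $\mathcal{Y}\subseteq\mathbb{R}^{n_y}$ are compact; $X:\Omega\to\mathcal{X}$, $Y:\Omega\to\mathcal{Y}$ are random variables. $\phi_1,\dots,\phi_d$ are continuous on $\mathcal{X}$, $\Phi^d(x)=[\phi_l(x)]_{l=1}^d$. $\mathbb{B}_R=\{a\in\mathbb{R}^d:\|a\|_2<R\}$ and $\operatorname{cl}\mathbb{B}_R$ its closure. A profile $\mathbf{a}=[a^1;\dots;a^N]\in\mathbb{R}^{Nd}$, $a^i\in\mathbb{R}^d$, defines $\hat z^i(x)=\sum_l a^i_l\phi_l(x)$ and $\hat z^{-i}(x)$ (stack over $j\neq i$). $\hat{\mathcal{Z}}^i=\bigcup\{\hat z^i(\mathcal{X}):a^i\in\operatorname{cl}\mathbb{B}_R\}$,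 $\hat{\mathcal{Z}}=\prod_i\hat{\mathcal{Z}}^i$. Player $i$ has objective $J^i(z^i;y,z^{-i})$ (derivative $\partial J^i$ in $z^i$) and constraint $h^i:\hat{\mathcal{Z}}^i\times\mathcal{Y}\to\mathbb{R}$. $F(z;y)=[\partial J^i(z^i;y,z^{-i})]_i$; $\mathbf{F}(\mathbf{a};x,y)=[\partial J^i(\hat z^i(x);y,\hat z^{-i}(x))\Phi^d(x)]_i$; $\mathbb{F}(\mathbf{a})=\mathbb{E}[\mathbf{F}(\mathbf{a};X,Y)]+\lambda\mathbf{a}$; $\bar h^i(a^i)=\mathbb{E}[h^i(\hat z^i(X);Y)]$. $\mathbb{A}^i=\{a^i\in\operatorname{cl}\mathbb{B}_R:\bar h^i(a^i)\le0\}$, $\mathbb{A}=\prod_i\mathbb{A}^i$. $P_K$ is Euclidean projection onto a closed convex set $K$. $\mathrm{VI}(K,G)$ asks for $\mathbf{a}^*\in K$ with $\langle G(\mathbf{a}^* ),\mathbf{a}-\mathbf{a}^*\rangle\ge0$ for all $\mathbf{a}\in K$. For a continuous $f:\mathbb{R}^m\to\mathbb{R}^m$ and an isolated zero $x_*$ of $f$, $\operatorname{ind}(f,x_* )$ is the Brouwer degree $\deg(f,U,0)$ for any bounded open neighborhood $U$ of $x_*$ whose closure contains no other zero of $f$. (A1) Each $J^i(\cdot;y,z^{-i})$ is continuously differentiable. (A2) For all $y$, $F(\cdot;y)$ is $L_F$-Lipschitz on $\hat{\mathcal{Z}}$ and each $h^i(\cdot;y)$ is $L_h$-Lipschitz on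 $\hat{\mathcal{Z}}^i$; some $z\in\hat{\mathcal{Z}}$ has $F(z;\mathcal{Y})$ and all $h^i(z^i;\mathcal{Y})$ bounded. (A3) For every $y$, $F(\cdot;y)$ is monotone on $\hat{\mathcal{Z}}$ and each $h^i(\cdot;y)$ is convex on $\hat{\mathcal{Z}}^i$. *)

theory Defs
  imports "HOL-Probability.Probability" "HOL-Homology.Homology"
begin

text \<open>Players are indexed by a finite type 'N (N = CARD('N)), basis functions by a finite
  type 'd (d = CARD('d)). A profile a in R^(Nd) is an element of real^'d^'N, a$i = a^i.
  A decision profile z is an element of real^'N (each z^i is a scalar).\<close>

definition Phi_vec :: "('d::finite \<Rightarrow> 'x \<Rightarrow> real) \<Rightarrow> 'x \<Rightarrow> real^'d" where
  "Phi_vec \<phi> x = (\<chi> l. \<phi> l x)"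

definition zhat :: "('d::finite \<Rightarrow> 'x \<Rightarrow> real) \<Rightarrow> real^'d \<Rightarrow> 'x \<Rightarrow> real" where
  "zhat \<phi> c x = (\<Sum>l\<in>UNIV. c$l * \<phi> l x)"

definition zvec :: "('d::finite \<Rightarrow> 'x \<Rightarrow> real) \<Rightarrow> real^'d^'N \<Rightarrow> 'x \<Rightarrow> real^'N::finite" where
  "zvec \<phi> a x = (\<chi> i. zhat \<phi> (a$i) x)"

text \<open>z^{-i}: the profile of the other players, encoded as z with the i-th slot set to 0
  (so any function of z^{-i} is a function of this vector and vice versa).\<close>
definition others :: "'N::finite \<Rightarrow> real^'N \<Rightarrow> real^'N" where
  "others i z = (\<chi> j. if j = i then 0 else z$j)"

definition Zhat_i :: "('d::finite \<Rightarrow> 'x \<Rightarrow> real) \<Rightarrow> real \<Rightarrow> 'x set \<Rightarrow> real set" where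
  "Zhat_i \<phi> R Xs = (\<Union>c\<in>cball (0::real^'d) R. (zhat \<phi> c) ` Xs)"

definition Zhat :: "('d::finite \<Rightarrow> 'x \<Rightarrow> real) \<Rightarrow> real \<Rightarrow> 'x set \<Rightarrow> (real^'N::finite) set" where
  "Zhat \<phi> R Xs = {z. \<forall>i. z$i \<in> Zhat_i \<phi> R Xs}"

definition Fgame :: "('N::finite \<Rightarrow> real \<Rightarrow> 'y \<Rightarrow> real^'N \<Rightarrow> real) \<Rightarrow> real^'N \<Rightarrow> 'y \<Rightarrow> real^'N" where
  "Fgame dJ z y = (\<chi> i. dJ i (z$i) y (others i z))"

definition Fvec :: "('N::finite \<Rightarrow> real \<Rightarrow> 'y \<Rightarrow> real^'N \<Rightarrow> real) \<Rightarrow> ('d::finite \<Rightarrow> 'x \<Rightarrow> real)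
    \<Rightarrow> real^'d^'N \<Rightarrow> 'x \<Rightarrow> 'y \<Rightarrow> real^'d^'N" where
  "Fvec dJ \<phi> a x y = (\<chi> i. dJ i (zhat \<phi> (a$i) x) y (others i (zvec \<phi> a x)) *\<^sub>R Phi_vec \<phi> x)"

definition bbF :: "'w measure \<Rightarrow> ('w \<Rightarrow> 'x) \<Rightarrow> ('w \<Rightarrow> 'y)
    \<Rightarrow> ('N::finite \<Rightarrow> real \<Rightarrow> 'y \<Rightarrow> real^'N \<Rightarrow> real) \<Rightarrow> ('d::finite \<Rightarrow> 'x \<Rightarrow> real) \<Rightarrow> real
    \<Rightarrow> real^'d^'N \<Rightarrow> real^'d^'N" where
  "bbF M X Y dJ \<phi> lam a = (\<integral>\<omega>. Fvec dJ \<phi> a (X \<omega>) (Y \<omega>) \<partial>M) + lam *\<^sub>R a"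

definition hbar :: "'w measure \<Rightarrow> ('w \<Rightarrow> 'x) \<Rightarrow> ('w \<Rightarrow> 'y) \<Rightarrow> ('N \<Rightarrow> real \<Rightarrow> 'y \<Rightarrow> real)
    \<Rightarrow> ('d::finite \<Rightarrow> 'x \<Rightarrow> real) \<Rightarrow> 'N \<Rightarrow> real^'d \<Rightarrow> real" where
  "hbar M X Y h \<phi> i c = (\<integral>\<omega>. h i (zhat \<phi> c (X \<omega>)) (Y \<omega>) \<partial>M)"

definition bbA :: "'w measure \<Rightarrow> ('w \<Rightarrow> 'x) \<Rightarrow> ('w \<Rightarrow> 'y) \<Rightarrow> ('N::finite \<Rightarrow> real \<Rightarrow> 'y \<Rightarrow> real)
    \<Rightarrow> ('d::finite \<Rightarrow> 'x \<Rightarrow> real) \<Rightarrow> real \<Rightarrow> (real^'d^'N) set" where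
  "bbA M X Y h \<phi> R = {a. \<forall>i. a$i \<in> cball 0 R \<and> hbar M X Y h \<phi> i (a$i) \<le> 0}"

definition VI_sol :: "'a::real_inner set \<Rightarrow> ('a \<Rightarrow> 'a) \<Rightarrow> 'a \<Rightarrow> bool" where
  "VI_sol K G a \<longleftrightarrow> a \<in> K \<and> (\<forall>b\<in>K. G a \<bullet> (b - a) \<ge> 0)"

text \<open>Euclidean projection P_K is the library's closest_point K.\<close>
definition normal_map :: "'a::euclidean_space set \<Rightarrow> ('a \<Rightarrow> 'a) \<Rightarrow> 'a \<Rightarrow> 'a" where
  "normal_map K G v = G (closest_point K v) + v - closest_point K v"

definition isolated_zero :: "('a::real_normed_vector \<Rightarrow> 'a) \<Rightarrow> 'a \<Rightarrow> bool" where
  "isolated_zero f x0 \<longleftrightarrow> f x0 = 0 \<and> (\<exists>e>0. \<forall>y\<in>cball x0 e. f y = 0 \<longrightarrow> y = x0)"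

text \<open>A fixed enumeration of the orthonormal basis, used to identify 'a with R^m,
  m = DIM('a), and hence the unit sphere of 'a with the library's nsphere (m-1).\<close>
definition coord_basis :: "nat \<Rightarrow> 'a::euclidean_space" where
  "coord_basis = (SOME e. bij_betw e {..<DIM('a)} Basis)"

definition to_coords :: "'a::euclidean_space \<Rightarrow> (nat \<Rightarrow> real)" where
  "to_coords v = (\<lambda>k. if k < DIM('a) then v \<bullet> coord_basis k else 0)"

definition from_coords :: "(nat \<Rightarrow> real) \<Rightarrow> 'a::euclidean_space" where
  "from_coords u = (\<Sum>k<DIM('a). u k *\<^sub>R coord_basis k)"

definition sphere_degree :: "('a::euclidean_space \<Rightarrow> 'a) \<Rightarrow> 'a \<Rightarrow> real \<Rightarrow> int" where
  "sphere_degree f x0 r =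
     Brouwer_degree2 (DIM('a) - 1) (\<lambda>u. to_coords (sgn (f (x0 + r *\<^sub>R from_coords u))))"

text \<open>Index of an isolated zero: deg(f, B(x0,r), 0) for all sufficiently small r, realised
  as the degree of f/|f| on the small spheres around x0.\<close>
definition zero_index :: "('a::euclidean_space \<Rightarrow> 'a) \<Rightarrow> 'a \<Rightarrow> int" where
  "zero_index f x0 = (THE d. \<exists>e>0. \<forall>r. 0 < r \<and> r < e \<longrightarrow> sphere_degree f x0 r = d)"

end

theory Submission
  imports Defs
begin

(* For lam > 0 the operator bbF is lam-strongly monotone on the closed convex set bbA: the monotone F
   enters bbF only through the linear maps from profiles to decisions zvec(., x), averaged over (X, Y). For a strongly monotone VI
   with solution a, the straight-line homotopy t F_nor(v) + (1 - t)(v - b) from the translation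
   v |-> v - b to the normal map vanishes only at b = a - F(a). Indeed, with p = P_A(v) a zero forces
   v - p = -(D + F(a)) for D = t (F(p) - F(a)) + (1 - t)(p - a); the projection inequality and the VI
   give <D, p - a> <= 0, while strong monotonicity gives <D, p - a> >= (t lam + 1 - t) |p - a|^2,
   so p = a and v = b. Hence on every sphere around b the map F_nor/|F_nor| is homotopic to the
   identity of the sphere, whose Brouwer degree is 1. *)

section \<open>Coordinates on the unit sphere\<close>

lemma coord_basis_bij: "bij_betw (coord_basis :: nat \<Rightarrow> 'a::euclidean_space) {..<DIM('a)} Basis"
proof -
  have "\<exists>e. bij_betw e {..<DIM('a)} (Basis::'a set)"
    using ex_bij_betw_nat_finite[of "Basis::'a set"] by (simp add: atLeast0LessThan)
  then show ?thesis unfolding coord_basis_def by (rule someI_ex)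
qed

lemma coord_basis_in_Basis: "k < DIM('a) \<Longrightarrow> (coord_basis k :: 'a::euclidean_space) \<in> Basis"
  using coord_basis_bij bij_betwE by blast

lemma inner_coord_basis:
  assumes "k < DIM('a)" "j < DIM('a)"
  shows "(coord_basis k :: 'a::euclidean_space) \<bullet> coord_basis j = (if k = j then 1 else 0)"
proof -
  have "inj_on (coord_basis :: nat \<Rightarrow> 'a) {..<DIM('a)}"
    using coord_basis_bij bij_betw_def by blast
  then show ?thesis
    using assms coord_basis_in_Basis[where 'a='a, OF assms(1)] coord_basis_in_Basis[where 'a='a, OF assms(2)]
    by (auto simp: inner_Basis inj_on_def)
qed

lemma sum_coord_basis:
  "(\<Sum>k<DIM('a). g (coord_basis k :: 'a::euclidean_space)) = (\<Sum>b\<in>Basis. g b)"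
  using sum.reindex_bij_betw[OF coord_basis_bij, of g] .

lemma inner_from_coords_coord_basis:
  assumes "j < DIM('a)"
  shows "(from_coords u :: 'a::euclidean_space) \<bullet> coord_basis j = u j"
proof -
  have "(from_coords u :: 'a) \<bullet> coord_basis j = (\<Sum>k<DIM('a). u k * (coord_basis k \<bullet> (coord_basis j :: 'a)))"
    unfolding from_coords_def by (simp add: inner_sum_left)
  also have "\<dots> = (\<Sum>k<DIM('a). if k = j then u k else 0)"
    by (rule sum.cong) (auto simp: inner_coord_basis assms)
  also have "\<dots> = u j"
    using assms by simp
  finally show ?thesis .
qed

lemma to_coords_from_coords:
  assumes "\<forall>k\<ge>DIM('a). u k = 0"
  shows "to_coords (from_coords u :: 'a::euclidean_space) = u"
  using assms inner_from_coords_coord_basis[where 'a='a] unfolding to_coords_def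
  by (auto simp: fun_eq_iff not_less)

lemma sum_power2_to_coords: "(\<Sum>k<DIM('a). (to_coords (v::'a::euclidean_space) k)^2) = (norm v)^2"
proof -
  have "(\<Sum>k<DIM('a). (to_coords v k)^2) = (\<Sum>k<DIM('a). (v \<bullet> coord_basis k)^2)"
    unfolding to_coords_def by (rule sum.cong) auto
  also have "\<dots> = (\<Sum>b\<in>Basis. (v \<bullet> b)^2)"
    by (rule sum_coord_basis)
  also have "\<dots> = v \<bullet> v"
    using euclidean_inner[of v v] by (simp only: power2_eq_square)
  finally show ?thesis
    by (simp only: power2_norm_eq_inner)
qed

lemma topspace_nsphere_DIM:
  "topspace (nsphere (DIM('a::euclidean_space) - 1)) =
     {u. (\<Sum>k<DIM('a). (u k)^2) = 1 \<and> (\<forall>k\<ge>DIM('a). u k = 0)}"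
proof -
  obtain n where n: "DIM('a) = Suc n"
    using DIM_positive[where 'a='a] gr0_conv_Suc by blast
  have "{..n} = {..<Suc n}" and "\<And>k. n < k \<longleftrightarrow> Suc n \<le> k"
    by auto
  then show ?thesis
    unfolding nsphere n by simp
qed

lemma to_coords_in_nsphere:
  assumes "(v::'a::euclidean_space) \<in> sphere 0 1"
  shows "to_coords v \<in> topspace (nsphere (DIM('a) - 1))"
  using sum_power2_to_coords[of v] assms unfolding topspace_nsphere_DIM
  by (simp add: to_coords_def)

lemma
  assumes "u \<in> topspace (nsphere (DIM('a::euclidean_space) - 1))"
  shows to_coords_from_coords_nsphere: "to_coords (from_coords u :: 'a) = u"
    and from_coords_in_sphere: "(from_coords u :: 'a) \<in> sphere 0 1"
proof -
  have u: "\<forall>k\<ge>DIM('a). u k = 0" "(\<Sum>k<DIM('a). (u k)^2) = 1"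
    using assms unfolding topspace_nsphere_DIM by auto
  show tf: "to_coords (from_coords u :: 'a) = u"
    using u(1) by (rule to_coords_from_coords)
  have "(norm (from_coords u :: 'a))^2 = 1"
    using sum_power2_to_coords[of "from_coords u :: 'a"] u(2) unfolding tf by simp
  then show "(from_coords u :: 'a) \<in> sphere 0 1"
    using norm_ge_zero[of "from_coords u :: 'a"] by (auto simp: power2_eq_1_iff)
qed

lemma continuous_map_to_coords_sphere:
  "continuous_map (top_of_set (sphere (0::'a::euclidean_space) 1)) (nsphere (DIM('a) - 1)) to_coords"
proof -
  have "continuous_map euclidean (powertop_real UNIV) (to_coords :: 'a \<Rightarrow> _)"
    unfolding continuous_map_componentwise_UNIV to_coords_def
    by (auto intro: continuous_intros)
  then have "continuous_map (top_of_set (sphere (0::'a) 1))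
      (subtopology (powertop_real UNIV) (topspace (nsphere (DIM('a) - 1)))) to_coords"
    using to_coords_in_nsphere
    by (intro continuous_map_into_subtopology continuous_map_from_subtopology) auto
  then show ?thesis
    unfolding nsphere by simp
qed

lemma continuous_map_from_coords_nsphere:
  "continuous_map (nsphere (DIM('a) - 1)) (top_of_set (sphere (0::'a::euclidean_space) 1)) from_coords"
proof -
  have "continuous_map (nsphere p) euclidean (\<lambda>u. u k *\<^sub>R (coord_basis k :: 'a))" for p k
    using continuous_map_compose[OF continuous_map_nsphere_projection[of p k],
        of euclidean "\<lambda>s. s *\<^sub>R (coord_basis k :: 'a)"]
    by (simp add: o_def continuous_on_scaleR continuous_on_id continuous_on_const)
  then have "continuous_map (nsphere (DIM('a) - 1)) euclidean (from_coords :: _ \<Rightarrow> 'a)"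
    unfolding from_coords_def by (intro continuous_map_sum) auto
  then show ?thesis
    by (rule continuous_map_into_subtopology) (use from_coords_in_sphere[where 'a='a] in blast)
qed

section \<open>Sphere degrees and the index of an isolated zero\<close>

lemma sphere_degree_straight_homotopic:
  fixes f g :: "'a::euclidean_space \<Rightarrow> 'a"
  assumes r: "r > 0" and f: "continuous_on (sphere x0 r) f" and g: "continuous_on (sphere x0 r) g"
    and nz: "\<And>t v. t \<in> {0..1} \<Longrightarrow> v \<in> sphere x0 r \<Longrightarrow> t *\<^sub>R f v + (1 - t) *\<^sub>R g v \<noteq> 0"
  shows "sphere_degree f x0 r = sphere_degree g x0 r"
proof -
  define p where "p = DIM('a) - 1"
  define k where "k = (\<lambda>w::real \<times> 'a.
    sgn (fst w *\<^sub>R f (x0 + r *\<^sub>R snd w) + (1 - fst w) *\<^sub>R g (x0 + r *\<^sub>R snd w)))"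
  define H where "H = (\<lambda>w::real \<times> (nat \<Rightarrow> real). to_coords (k (fst w, from_coords (snd w))))"
  have to_sphere: "x0 + r *\<^sub>R u \<in> sphere x0 r" if "u \<in> sphere 0 1" for u :: 'a
    using r that by (simp add: dist_norm)
  have "continuous_on ({0..1} \<times> sphere 0 1) k"
  proof -
    have "continuous_on ({0..1} \<times> sphere 0 1) (\<lambda>w. f (x0 + r *\<^sub>R snd w))"
      and "continuous_on ({0..1} \<times> sphere 0 1) (\<lambda>w. g (x0 + r *\<^sub>R snd w))"
      using to_sphere
      by (auto intro!: continuous_on_compose2[OF f] continuous_on_compose2[OF g] continuous_intros)
    moreover have "fst w *\<^sub>R f (x0 + r *\<^sub>R snd w) + (1 - fst w) *\<^sub>R g (x0 + r *\<^sub>R snd w) \<noteq> 0"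
      if "w \<in> {0..1} \<times> sphere 0 1" for w :: "real \<times> 'a"
      using that nz to_sphere by auto
    ultimately show ?thesis
      unfolding k_def by (intro continuous_intros) auto
  qed
  moreover have "k \<in> {0..1} \<times> sphere 0 1 \<rightarrow> sphere 0 1"
  proof
    fix w :: "real \<times> 'a" assume "w \<in> {0..1} \<times> sphere 0 1"
    then show "k w \<in> sphere 0 1"
      unfolding k_def using nz[of "fst w" "x0 + r *\<^sub>R snd w"] to_sphere[of "snd w"] by (auto simp: norm_sgn)
  qed
  ultimately have k: "continuous_map (top_of_set ({0..1} \<times> sphere 0 1)) (top_of_set (sphere 0 1)) k"
    by (auto intro: continuous_map_into_subtopology)
  have "continuous_map (prod_topology (top_of_set {0..1}) (nsphere p))
      (prod_topology (top_of_set {0..1}) (top_of_set (sphere 0 1))) (\<lambda>w. (fst w, from_coords (snd w) :: 'a))"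
    unfolding p_def
    by (intro continuous_map_pairedI continuous_map_fst
        continuous_map_compose[OF continuous_map_snd continuous_map_from_coords_nsphere, unfolded o_def])
  then have "continuous_map (prod_topology (top_of_set {0..1}) (nsphere p))
      (top_of_set ({0..1} \<times> sphere 0 1)) (\<lambda>w. (fst w, from_coords (snd w) :: 'a))"
    by (simp add: subtopology_Times[symmetric])
  then have "continuous_map (prod_topology (top_of_set {0..1}) (nsphere p)) (nsphere p) H"
    using continuous_map_compose[OF continuous_map_compose[OF _ k] continuous_map_to_coords_sphere]
    unfolding H_def p_def o_def by blast
  then have "homotopic_with (\<lambda>_. True) (nsphere p) (nsphere p) (\<lambda>u. H (0, u)) (\<lambda>u. H (1, u))"
    unfolding homotopic_with_def by blast
  then have "Brouwer_degree2 p (\<lambda>u. H (1, u)) = Brouwer_degree2 p (\<lambda>u. H (0, u))"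
    using Brouwer_degree2_homotopic by metis
  then show ?thesis
    unfolding sphere_degree_def H_def k_def p_def by simp
qed

lemma sphere_degree_translation:
  fixes x0 :: "'a::euclidean_space"
  assumes "r > 0"
  shows "sphere_degree (\<lambda>v. v - x0) x0 r = 1"
proof -
  have "to_coords (sgn (x0 + r *\<^sub>R from_coords u - x0)) = id u"
    if "u \<in> topspace (nsphere (DIM('a) - 1))" for u
  proof -
    have "sgn (r *\<^sub>R (from_coords u :: 'a)) = from_coords u"
      using assms from_coords_in_sphere[OF that] by (simp add: sgn_scaleR sgn_div_norm)
    then show ?thesis
      using to_coords_from_coords_nsphere[OF that] by simp
  qed
  then have "Brouwer_degree2 (DIM('a) - 1) (\<lambda>u. to_coords (sgn (x0 + r *\<^sub>R from_coords u - x0)))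
      = Brouwer_degree2 (DIM('a) - 1) id"
    by (rule Brouwer_degree2_eq)
  then show ?thesis
    unfolding sphere_degree_def by simp
qed

lemma zero_index_eqI:
  assumes "e > 0" and "\<And>r. 0 < r \<Longrightarrow> r < e \<Longrightarrow> sphere_degree f x0 r = d"
  shows "zero_index f x0 = d"
  unfolding zero_index_def
proof (rule the_equality)
  show "\<exists>e>0. \<forall>r. 0 < r \<and> r < e \<longrightarrow> sphere_degree f x0 r = d"
    using assms by blast
next
  fix d' assume "\<exists>e'>0. \<forall>r. 0 < r \<and> r < e' \<longrightarrow> sphere_degree f x0 r = d'"
  then obtain e' where "e' > 0" and "\<And>r. 0 < r \<Longrightarrow> r < e' \<Longrightarrow> sphere_degree f x0 r = d'"
    by blast
  moreover have "0 < min e e' / 2" and "min e e' / 2 < e" and "min e e' / 2 < e'"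
    using assms(1) \<open>e' > 0\<close> by auto
  ultimately show "d' = d"
    using assms(2) by metis
qed

lemma isolated_zero_index_eq_1:
  fixes N :: "'a::euclidean_space \<Rightarrow> 'a"
  assumes cont: "continuous_on UNIV N" and zero: "N x0 = 0"
    and nz: "\<And>t v. t \<in> {0..1} \<Longrightarrow> v \<noteq> x0 \<Longrightarrow> t *\<^sub>R N v + (1 - t) *\<^sub>R (v - x0) \<noteq> 0"
  shows "isolated_zero N x0 \<and> zero_index N x0 = 1"
proof
  show "isolated_zero N x0"
    unfolding isolated_zero_def using zero nz[of 1] by (auto intro!: exI[of _ 1])
  have "sphere_degree N x0 r = 1" if "r > 0" for r
  proof -
    have "sphere_degree N x0 r = sphere_degree (\<lambda>v. v - x0) x0 r"
      using that nz
      by (intro sphere_degree_straight_homotopic continuous_on_subset[OF cont]) (auto intro: continuous_intros)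
    then show ?thesis
      using sphere_degree_translation[OF that] by simp
  qed
  then show "zero_index N x0 = 1"
    by (intro zero_index_eqI[of 1]) auto
qed

section \<open>The normal map of a strongly monotone variational inequality\<close>

definition strongly_monotone_on :: "real \<Rightarrow> 'a::real_inner set \<Rightarrow> ('a \<Rightarrow> 'a) \<Rightarrow> bool" where
  "strongly_monotone_on c K G \<longleftrightarrow> (\<forall>p\<in>K. \<forall>q\<in>K. c * (norm (p - q))^2 \<le> (G p - G q) \<bullet> (p - q))"

lemma strongly_monotone_on_subset:
  "strongly_monotone_on c K G \<Longrightarrow> L \<subseteq> K \<Longrightarrow> strongly_monotone_on c L G"
  unfolding strongly_monotone_on_def by blast

lemma closest_point_VI_sol:
  fixes K :: "'a::euclidean_space set"
  assumes K: "closed K" "convex K" and sol: "VI_sol K G a"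
  shows "closest_point K (a - G a) = a"
proof -
  have aK: "a \<in> K" and vi: "\<And>b. b \<in> K \<Longrightarrow> G a \<bullet> (b - a) \<ge> 0"
    using sol unfolding VI_sol_def by auto
  have "dist (a - G a) a \<le> dist (a - G a) b" if "b \<in> K" for b
  proof -
    have "(dist (a - G a) b)^2 = (norm (G a))^2 + 2 * (G a \<bullet> (b - a)) + (norm (b - a))^2"
      by (simp add: dist_norm power2_norm_eq_inner algebra_simps inner_commute)
    then have "(dist (a - G a) a)^2 \<le> (dist (a - G a) b)^2"
      using vi[OF that] by (simp add: dist_norm)
    then show ?thesis
      by (simp add: power2_le_iff_abs_le)
  qed
  then show ?thesis
    using closest_point_unique[OF K(2,1) aK] by metis
qed

lemma normal_map_VI_sol_zero:
  fixes K :: "'a::euclidean_space set"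
  assumes "closed K" "convex K" "VI_sol K G a"
  shows "normal_map K G (a - G a) = 0"
  unfolding normal_map_def closest_point_VI_sol[OF assms] by simp

lemma normal_map_straight_homotopy_nonzero:
  fixes K :: "'a::euclidean_space set"
  assumes K: "closed K" "convex K" and sol: "VI_sol K G a"
    and strong: "strongly_monotone_on c K G" and c: "c > 0"
    and t: "t \<in> {0..1}" and v: "v \<noteq> a - G a"
  shows "t *\<^sub>R normal_map K G v + (1 - t) *\<^sub>R (v - (a - G a)) \<noteq> 0"
proof
  assume eq: "t *\<^sub>R normal_map K G v + (1 - t) *\<^sub>R (v - (a - G a)) = 0"
  have aK: "a \<in> K"
    using sol unfolding VI_sol_def by blast
  define p where "p = closest_point K v"
  define D where "D = t *\<^sub>R (G p - G a) + (1 - t) *\<^sub>R (p - a)"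
  have pK: "p \<in> K"
    unfolding p_def using closest_point_in_set[OF K(1)] aK by blast
  have "v - p + (D + G a) = t *\<^sub>R normal_map K G v + (1 - t) *\<^sub>R (v - (a - G a))"
    unfolding normal_map_def p_def[symmetric] D_def by (simp add: algebra_simps)
  then have v_eq: "v - p = - (D + G a)"
    using eq by (simp only: eq_neg_iff_add_eq_0)
  have "(D + G a) \<bullet> (p - a) = (v - p) \<bullet> (a - p)"
    unfolding v_eq by (simp add: algebra_simps inner_diff_right)
  also have "\<dots> \<le> 0"
    unfolding p_def by (rule closest_point_dot[OF K(2,1) aK])
  finally have "D \<bullet> (p - a) \<le> - (G a \<bullet> (p - a))"
    by (simp add: inner_add_left)
  also have "\<dots> \<le> 0"
    using sol pK unfolding VI_sol_def by simp
  finally have D_nonpos: "D \<bullet> (p - a) \<le> 0" .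
  have "t * (c * (norm (p - a))^2) \<le> t * ((G p - G a) \<bullet> (p - a))"
    using strong pK aK t unfolding strongly_monotone_on_def by (intro mult_left_mono) auto
  then have "(t * c + (1 - t)) * (norm (p - a))^2 \<le> D \<bullet> (p - a)"
    unfolding D_def by (simp add: inner_add_left power2_norm_eq_inner algebra_simps)
  then have "(t * c + (1 - t)) * (norm (p - a))^2 \<le> 0"
    using D_nonpos by linarith
  moreover have "t * c + (1 - t) > 0"
    using t c by (cases "t < 1") (auto intro: add_nonneg_pos)
  ultimately have "p = a"
    by (simp add: mult_le_0_iff)
  then have "v = a - G a"
    using v_eq unfolding D_def by (simp add: algebra_simps)
  with v show False ..
qed

lemma continuous_on_normal_map:
  fixes K :: "'a::euclidean_space set"
  assumes "closed K" "convex K" "K \<noteq> {}" "continuous_on K G"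
  shows "continuous_on UNIV (normal_map K G)"
proof -
  have P: "continuous_on UNIV (closest_point K)"
    by (rule continuous_on_closest_point[OF assms(2,1,3)])
  then have "continuous_on UNIV (\<lambda>v. G (closest_point K v))"
    using closest_point_in_set[OF assms(1,3)] by (auto intro: continuous_on_compose2[OF assms(4)])
  then show ?thesis
    unfolding normal_map_def[abs_def] by (intro continuous_intros P)
qed

theorem zero_index_normal_map_VI_sol:
  fixes K :: "'a::euclidean_space set"
  assumes K: "closed K" "convex K" and G: "continuous_on K G" "strongly_monotone_on c K G"
    and c: "c > 0" and sol: "VI_sol K G a"
  shows "isolated_zero (normal_map K G) (a - G a) \<and> zero_index (normal_map K G) (a - G a) = 1"
proof (rule isolated_zero_index_eq_1)
  have "K \<noteq> {}"
    using sol unfolding VI_sol_def by auto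
  then show "continuous_on UNIV (normal_map K G)"
    using K G(1) by (intro continuous_on_normal_map)
  show "normal_map K G (a - G a) = 0"
    using K sol by (rule normal_map_VI_sol_zero)
  show "\<And>t v. t \<in> {0..1} \<Longrightarrow> v \<noteq> a - G a \<Longrightarrow>
      t *\<^sub>R normal_map K G v + (1 - t) *\<^sub>R (v - (a - G a)) \<noteq> 0"
    using normal_map_straight_homotopy_nonzero[OF K sol G(2) c] by blast
qed


section \<open>Expectations of Lipschitz and convex integrands\<close>

lemma (in prob_space) lipschitz_on_integral:
  fixes f :: "'p::metric_space \<Rightarrow> 'a \<Rightarrow> 'c::{banach, second_countable_topology}"
  assumes int: "\<And>a. a \<in> S \<Longrightarrow> integrable M (f a)"
    and lip: "\<And>\<omega>. \<omega> \<in> space M \<Longrightarrow> L-lipschitz_on S (\<lambda>a. f a \<omega>)"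
  shows "L-lipschitz_on S (\<lambda>a. \<integral>\<omega>. f a \<omega> \<partial>M)"
proof (rule lipschitz_onI)
  fix a b assume a: "a \<in> S" and b: "b \<in> S"
  have "dist (\<integral>\<omega>. f a \<omega> \<partial>M) (\<integral>\<omega>. f b \<omega> \<partial>M) = norm (\<integral>\<omega>. f a \<omega> - f b \<omega> \<partial>M)"
    using int[OF a] int[OF b] by (simp add: dist_norm)
  also have "\<dots> \<le> (\<integral>\<omega>. norm (f a \<omega> - f b \<omega>) \<partial>M)"
    by (rule integral_norm_bound)
  also have "\<dots> \<le> L * dist a b"
    using int[OF a] int[OF b] lipschitz_onD[OF lip a b]
    by (intro integral_le_const) (auto simp: dist_norm)
  finally show "dist (\<integral>\<omega>. f a \<omega> \<partial>M) (\<integral>\<omega>. f b \<omega> \<partial>M) \<le> L * dist a b" .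
next
  obtain \<omega> where "\<omega> \<in> space M"
    using not_empty by blast
  then show "0 \<le> L"
    using lip lipschitz_on_nonneg by blast
qed

lemma convex_on_integral:
  fixes f :: "'a::real_vector \<Rightarrow> 'b \<Rightarrow> real"
  assumes S: "convex S" and int: "\<And>c. c \<in> S \<Longrightarrow> integrable M (f c)"
    and conv: "\<And>\<omega>. \<omega> \<in> space M \<Longrightarrow> convex_on S (\<lambda>c. f c \<omega>)"
  shows "convex_on S (\<lambda>c. \<integral>\<omega>. f c \<omega> \<partial>M)"
  unfolding convex_on_def
proof (intro conjI S ballI allI impI)
  fix x y and u v :: real
  assume x: "x \<in> S" and y: "y \<in> S" and uv: "0 \<le> u" "0 \<le> v" "u + v = 1"
  have "(\<integral>\<omega>. f (u *\<^sub>R x + v *\<^sub>R y) \<omega> \<partial>M) \<le> (\<integral>\<omega>. u * f x \<omega> + v * f y \<omega> \<partial>M)"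
    using x y uv conv int convexD[OF S x y]
    by (intro integral_mono) (auto simp: convex_on_def)
  also have "\<dots> = u * (\<integral>\<omega>. f x \<omega> \<partial>M) + v * (\<integral>\<omega>. f y \<omega> \<partial>M)"
    using int[OF x] int[OF y] by simp
  finally show "(\<integral>\<omega>. f (u *\<^sub>R x + v *\<^sub>R y) \<omega> \<partial>M)
      \<le> u * (\<integral>\<omega>. f x \<omega> \<partial>M) + v * (\<integral>\<omega>. f y \<omega> \<partial>M)" .
qed

lemma convex_on_linear_compose:
  assumes f: "convex_on T f" and g: "linear g" and S: "convex S" "g ` S \<subseteq> T"
  shows "convex_on S (\<lambda>x. f (g x))"
  using f S unfolding convex_on_def by (auto simp: linear_add[OF g] linear_scale[OF g] image_subset_iff)

lemma convex_on_sublevel_set: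
  assumes "convex_on S f"
  shows "convex {x \<in> S. f x \<le> r}"
proof (rule convexI)
  fix x y and u v :: real
  assume x: "x \<in> {x \<in> S. f x \<le> r}" and y: "y \<in> {x \<in> S. f x \<le> r}"
    and uv: "0 \<le> u" "0 \<le> v" "u + v = 1"
  have "f (u *\<^sub>R x + v *\<^sub>R y) \<le> u * f x + v * f y"
    using assms x y uv unfolding convex_on_def by blast
  also have "\<dots> \<le> u * r + v * r"
    using x y uv by (intro add_mono mult_left_mono) auto
  finally show "u *\<^sub>R x + v *\<^sub>R y \<in> {x \<in> S. f x \<le> r}"
    using assms x y uv unfolding convex_on_def convex_def by (auto simp: distrib_right[symmetric])
qed

lemma lipschitz_family_bounded:
  fixes f :: "'y \<Rightarrow> 'a::metric_space \<Rightarrow> 'b::real_normed_vector"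
  assumes S: "bounded S" and z0: "z0 \<in> S" and bdd: "bounded ((\<lambda>y. f y z0) ` Ys)"
    and lip: "\<And>y. y \<in> Ys \<Longrightarrow> L-lipschitz_on S (f y)"
  shows "\<exists>B. \<forall>y\<in>Ys. \<forall>z\<in>S. norm (f y z) \<le> B"
proof -
  obtain D where D: "\<And>z. z \<in> S \<Longrightarrow> dist z0 z \<le> D"
    using S unfolding bounded_any_center[of _ z0] by blast
  obtain C where C: "\<And>y. y \<in> Ys \<Longrightarrow> norm (f y z0) \<le> C"
    using bdd unfolding bounded_iff by blast
  have "norm (f y z) \<le> C + L * D" if y: "y \<in> Ys" and z: "z \<in> S" for y z
  proof -
    have "norm (f y z) \<le> norm (f y z0) + dist (f y z) (f y z0)"
      by (simp add: dist_norm norm_triangle_sub)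
    also have "dist (f y z) (f y z0) \<le> L * dist z0 z"
      using lipschitz_onD[OF lip[OF y] z z0] by (simp add: dist_commute)
    also have "\<dots> \<le> L * D"
      using D[OF z] lipschitz_on_nonneg[OF lip[OF y]] by (rule mult_left_mono)
    finally show ?thesis
      using C[OF y] by linarith
  qed
  then show ?thesis
    by blast
qed

section \<open>The expected game operator and constraint set\<close>

lemma zhat_inner: "zhat \<phi> c x = c \<bullet> Phi_vec \<phi> x"
  unfolding zhat_def Phi_vec_def inner_vec_def by simp

lemma zvec_diff: "zvec \<phi> a x - zvec \<phi> b x = (\<chi> i. (a - b)$i \<bullet> Phi_vec \<phi> x)"
  unfolding zvec_def zhat_inner by (simp add: vec_eq_iff inner_diff_left)

lemma norm_zvec_diff_le: "norm (zvec \<phi> a x - zvec \<phi> b x) \<le> norm (a - b) * norm (Phi_vec \<phi> x)"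
proof -
  have "norm (zvec \<phi> a x - zvec \<phi> b x) = L2_set (\<lambda>i. \<bar>(a - b)$i \<bullet> Phi_vec \<phi> x\<bar>) UNIV"
    unfolding zvec_diff norm_vec_def by simp
  also have "\<dots> \<le> L2_set (\<lambda>i. norm (Phi_vec \<phi> x) * norm ((a - b)$i)) UNIV"
    by (intro L2_set_mono) (simp_all add: Cauchy_Schwarz_ineq2 mult.commute[of "norm (Phi_vec \<phi> x)"])
  also have "\<dots> = norm (a - b) * norm (Phi_vec \<phi> x)"
    unfolding norm_vec_def by (simp add: L2_set_right_distrib mult.commute)
  finally show ?thesis .
qed

lemma norm_vec_scaleR: "norm (\<chi> i. s$i *\<^sub>R w) = norm (s::real^'n::finite) * norm w"
proof -
  have "norm (\<chi> i. s$i *\<^sub>R w) = L2_set (\<lambda>i. norm w * norm (s$i)) UNIV"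
    unfolding norm_vec_def by (simp add: mult.commute)
  then show ?thesis
    unfolding norm_vec_def by (simp add: L2_set_right_distrib mult.commute)
qed

lemma inner_vec_scaleR:
  fixes s :: "real^'n::finite" and w :: "'b::real_inner"
  shows "(\<chi> i. s$i *\<^sub>R w) \<bullet> d = s \<bullet> (\<chi> i. d$i \<bullet> w)"
  unfolding inner_vec_def by (rule sum.cong) (simp_all add: inner_commute)

lemma Fvec_eq_Fgame: "Fvec dJ \<phi> a x y = (\<chi> i. Fgame dJ (zvec \<phi> a x) y $ i *\<^sub>R Phi_vec \<phi> x)"
  unfolding Fvec_def Fgame_def zvec_def by simp

lemma Fvec_diff:
  "Fvec dJ \<phi> a x y - Fvec dJ \<phi> b x y
    = (\<chi> i. (Fgame dJ (zvec \<phi> a x) y - Fgame dJ (zvec \<phi> b x) y) $ i *\<^sub>R Phi_vec \<phi> x)"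
  unfolding Fvec_eq_Fgame by (simp add: vec_eq_iff scaleR_diff_left)

lemma inner_Fvec_diff:
  "(Fvec dJ \<phi> a x y - Fvec dJ \<phi> b x y) \<bullet> (a - b)
    = (Fgame dJ (zvec \<phi> a x) y - Fgame dJ (zvec \<phi> b x) y) \<bullet> (zvec \<phi> a x - zvec \<phi> b x)"
  unfolding Fvec_diff zvec_diff by (rule inner_vec_scaleR)

lemma bbA_eq_INT:
  "bbA M X Y h \<phi> R = (\<Inter>i. (\<lambda>a. a$i) -` {c \<in> cball 0 R. hbar M X Y h \<phi> i c \<le> 0})"
  unfolding bbA_def by auto

locale basis_expansion_game = prob_space M
  for M :: "'w measure" and X :: "'w \<Rightarrow> 'x::euclidean_space" and Y :: "'w \<Rightarrow> 'y::euclidean_space"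
    and Xs :: "'x set" and Ys :: "'y set"
    and \<phi> :: "'d::finite \<Rightarrow> 'x \<Rightarrow> real"
    and dJ :: "'N::finite \<Rightarrow> real \<Rightarrow> 'y \<Rightarrow> real^'N \<Rightarrow> real"
    and h :: "'N \<Rightarrow> real \<Rightarrow> 'y \<Rightarrow> real"
    and R L_F L_h :: real +
  assumes Xs_compact: "compact Xs"
    and X_in: "\<And>\<omega>. \<omega> \<in> space M \<Longrightarrow> X \<omega> \<in> Xs"
    and Y_in: "\<And>\<omega>. \<omega> \<in> space M \<Longrightarrow> Y \<omega> \<in> Ys"
    and \<phi>_cont: "\<And>l. continuous_on Xs (\<phi> l)"
    and F_meas: "\<And>a. (\<forall>i. a$i \<in> cball 0 R) \<Longrightarrow>
                   (\<lambda>\<omega>. Fvec dJ \<phi> a (X \<omega>) (Y \<omega>)) \<in> borel_measurable M"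
    and h_meas: "\<And>i c. c \<in> cball 0 R \<Longrightarrow>
                   (\<lambda>\<omega>. h i (zhat \<phi> c (X \<omega>)) (Y \<omega>)) \<in> borel_measurable M"
    and A2_F_lip: "\<And>y. y \<in> Ys \<Longrightarrow> lipschitz_on L_F (Zhat \<phi> R Xs) (\<lambda>z. Fgame dJ z y)"
    and A2_h_lip: "\<And>i y. y \<in> Ys \<Longrightarrow> lipschitz_on L_h (Zhat_i \<phi> R Xs) (\<lambda>w. h i w y)"
    and A2_bdd: "\<exists>z\<in>Zhat \<phi> R Xs. bounded ((\<lambda>y. Fgame dJ z y) ` Ys) \<and>
                   (\<forall>i. bounded ((\<lambda>y. h i (z$i) y) ` Ys))"
    and A3_mono: "\<And>y z z'. y \<in> Ys \<Longrightarrow> z \<in> Zhat \<phi> R Xs \<Longrightarrow> z' \<in> Zhat \<phi> R Xs \<Longrightarrow>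
                   (Fgame dJ z y - Fgame dJ z' y) \<bullet> (z - z') \<ge> 0"
    and A3_convex: "\<And>i y. y \<in> Ys \<Longrightarrow> convex_on (Zhat_i \<phi> R Xs) (\<lambda>w. h i w y)"
begin

definition cball_profiles :: "(real^'d^'N) set" where
  "cball_profiles = {a. \<forall>i. a$i \<in> cball 0 R}"

lemma bbA_subset_cball_profiles: "bbA M X Y h \<phi> R \<subseteq> cball_profiles"
  unfolding bbA_def cball_profiles_def by auto

lemma Phi_vec_bounded: "\<exists>P. \<forall>x\<in>Xs. norm (Phi_vec \<phi> x) \<le> P"
proof -
  have "continuous_on Xs (Phi_vec \<phi>)"
    unfolding Phi_vec_def[abs_def] by (intro continuous_on_vec_lambda \<phi>_cont)
  then have "bounded (Phi_vec \<phi> ` Xs)"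
    by (intro compact_imp_bounded compact_continuous_image Xs_compact)
  then show ?thesis
    unfolding bounded_iff by blast
qed

lemma zhat_in_Zhat_i: "c \<in> cball 0 R \<Longrightarrow> x \<in> Xs \<Longrightarrow> zhat \<phi> c x \<in> Zhat_i \<phi> R Xs"
  unfolding Zhat_i_def by auto

lemma zvec_in_Zhat: "a \<in> cball_profiles \<Longrightarrow> x \<in> Xs \<Longrightarrow> zvec \<phi> a x \<in> Zhat \<phi> R Xs"
  unfolding cball_profiles_def Zhat_def Zhat_i_def zvec_def by auto

lemma bounded_Zhat_i: "bounded (Zhat_i \<phi> R Xs)"
proof -
  obtain P where P: "\<forall>x\<in>Xs. norm (Phi_vec \<phi> x) \<le> P"
    using Phi_vec_bounded by blast
  have "\<bar>w\<bar> \<le> R * P" if w_in: "w \<in> Zhat_i \<phi> R Xs" for w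
  proof -
    obtain c x where c: "c \<in> cball 0 R" and x: "x \<in> Xs" and w: "w = c \<bullet> Phi_vec \<phi> x"
      using w_in unfolding Zhat_i_def zhat_inner by blast
    have "\<bar>w\<bar> \<le> norm c * norm (Phi_vec \<phi> x)"
      unfolding w by (rule Cauchy_Schwarz_ineq2)
    also have "\<dots> \<le> R * P"
      using c x P by (intro mult_mono) (auto intro: order_trans[OF norm_ge_zero])
    finally show ?thesis .
  qed
  then show ?thesis
    unfolding bounded_iff real_norm_def by blast
qed

lemma bounded_Zhat: "bounded (Zhat \<phi> R Xs :: (real^'N) set)"
proof -
  obtain B where B: "\<And>w. w \<in> Zhat_i \<phi> R Xs \<Longrightarrow> \<bar>w\<bar> \<le> B"
    using bounded_Zhat_i unfolding bounded_iff real_norm_def by blast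
  have "norm z \<le> real CARD('N) * B" if "z \<in> Zhat \<phi> R Xs" for z :: "real^'N"
  proof -
    have "norm z \<le> (\<Sum>i\<in>UNIV. \<bar>z$i\<bar>)"
      by (rule norm_le_l1_cart)
    also have "\<dots> \<le> real CARD('N) * B"
      using that B unfolding Zhat_def by (intro sum_bounded_above[where K=B, simplified]) auto
    finally show ?thesis .
  qed
  then show ?thesis
    unfolding bounded_iff by blast
qed

lemma Fgame_bounded: "\<exists>B. \<forall>y\<in>Ys. \<forall>z\<in>Zhat \<phi> R Xs. norm (Fgame dJ z y) \<le> B"
proof -
  obtain z0 where "z0 \<in> Zhat \<phi> R Xs" and "bounded ((\<lambda>y. Fgame dJ z0 y) ` Ys)"
    using A2_bdd by blast
  then show ?thesis
    using lipschitz_family_bounded[OF bounded_Zhat, of z0 "\<lambda>y z. Fgame dJ z y"] A2_F_lip by blast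
qed

lemma h_bounded: "\<exists>B. \<forall>y\<in>Ys. \<forall>w\<in>Zhat_i \<phi> R Xs. \<bar>h i w y\<bar> \<le> B"
proof -
  obtain z0 :: "real^'N" where "z0$i \<in> Zhat_i \<phi> R Xs" and "bounded ((\<lambda>y. h i (z0$i) y) ` Ys)"
    using A2_bdd unfolding Zhat_def by blast
  then show ?thesis
    using lipschitz_family_bounded[OF bounded_Zhat_i, of "z0$i" "\<lambda>y w. h i w y"] A2_h_lip
    unfolding real_norm_def by blast
qed

lemma integrable_Fvec:
  assumes a: "a \<in> cball_profiles"
  shows "integrable M (\<lambda>\<omega>. Fvec dJ \<phi> a (X \<omega>) (Y \<omega>))"
proof -
  obtain B where B: "\<forall>y\<in>Ys. \<forall>z\<in>Zhat \<phi> R Xs. norm (Fgame dJ z y) \<le> B"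
    using Fgame_bounded by blast
  obtain P where P: "\<forall>x\<in>Xs. norm (Phi_vec \<phi> x) \<le> P"
    using Phi_vec_bounded by blast
  have "norm (Fvec dJ \<phi> a (X \<omega>) (Y \<omega>)) \<le> B * P" if \<omega>: "\<omega> \<in> space M" for \<omega>
    unfolding Fvec_eq_Fgame norm_vec_scaleR
    using B P zvec_in_Zhat[OF a X_in[OF \<omega>]] X_in[OF \<omega>] Y_in[OF \<omega>]
    by (intro mult_mono) (auto intro: order_trans[OF norm_ge_zero])
  then show ?thesis
    using F_meas a unfolding cball_profiles_def by (intro integrable_const_bound[where B="B * P"]) auto
qed

lemma integrable_h:
  assumes c: "c \<in> cball 0 R"
  shows "integrable M (\<lambda>\<omega>. h i (zhat \<phi> c (X \<omega>)) (Y \<omega>))"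
proof -
  obtain B where "\<forall>y\<in>Ys. \<forall>w\<in>Zhat_i \<phi> R Xs. \<bar>h i w y\<bar> \<le> B"
    using h_bounded by blast
  then show ?thesis
    using h_meas[OF c] zhat_in_Zhat_i[OF c X_in] Y_in
    by (intro integrable_const_bound[where B=B]) auto
qed

lemma continuous_on_bbF: "continuous_on cball_profiles (bbF M X Y dJ \<phi> lam)"
proof -
  obtain P where P: "\<forall>x\<in>Xs. norm (Phi_vec \<phi> x) \<le> P"
    using Phi_vec_bounded by blast
  have "(L_F * P * P)-lipschitz_on cball_profiles (\<lambda>a. Fvec dJ \<phi> a (X \<omega>) (Y \<omega>))"
    if \<omega>: "\<omega> \<in> space M" for \<omega>
  proof (rule lipschitz_onI)
    have L_F: "0 \<le> L_F"
      using lipschitz_on_nonneg[OF A2_F_lip[OF Y_in[OF \<omega>]]] .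
    have P0: "0 \<le> P"
      using P X_in[OF \<omega>] norm_ge_zero order_trans by blast
    then show "0 \<le> L_F * P * P"
      using L_F by simp
    fix a b assume a: "a \<in> cball_profiles" and b: "b \<in> cball_profiles"
    let ?x = "X \<omega>" and ?y = "Y \<omega>"
    have "dist (Fvec dJ \<phi> a ?x ?y) (Fvec dJ \<phi> b ?x ?y)
        = norm (Fgame dJ (zvec \<phi> a ?x) ?y - Fgame dJ (zvec \<phi> b ?x) ?y) * norm (Phi_vec \<phi> ?x)"
      unfolding dist_norm Fvec_diff norm_vec_scaleR ..
    also have "\<dots> \<le> (L_F * norm (zvec \<phi> a ?x - zvec \<phi> b ?x)) * P"
      using lipschitz_on_normD[OF A2_F_lip[OF Y_in[OF \<omega>]] zvec_in_Zhat[OF a X_in[OF \<omega>]]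
          zvec_in_Zhat[OF b X_in[OF \<omega>]]] P X_in[OF \<omega>] L_F
      by (intro mult_mono) auto
    also have "\<dots> \<le> (L_F * (norm (a - b) * P)) * P"
    proof -
      have "norm (zvec \<phi> a ?x - zvec \<phi> b ?x) \<le> norm (a - b) * norm (Phi_vec \<phi> ?x)"
        by (rule norm_zvec_diff_le)
      also have "\<dots> \<le> norm (a - b) * P"
        using P X_in[OF \<omega>] by (intro mult_left_mono) auto
      finally show ?thesis
        using L_F P0 by (intro mult_right_mono mult_left_mono)
    qed
    finally show "dist (Fvec dJ \<phi> a ?x ?y) (Fvec dJ \<phi> b ?x ?y) \<le> L_F * P * P * dist a b"
      by (simp add: dist_norm algebra_simps)
  qed
  then have "continuous_on cball_profiles (\<lambda>a. \<integral>\<omega>. Fvec dJ \<phi> a (X \<omega>) (Y \<omega>) \<partial>M)"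
    by (intro lipschitz_on_continuous_on lipschitz_on_integral integrable_Fvec)
  then show ?thesis
    unfolding bbF_def[abs_def] by (intro continuous_intros)
qed

lemma strongly_monotone_bbF: "strongly_monotone_on lam cball_profiles (bbF M X Y dJ \<phi> lam)"
  unfolding strongly_monotone_on_def
proof (intro ballI)
  fix a b assume a: "a \<in> cball_profiles" and b: "b \<in> cball_profiles"
  let ?Fa = "\<lambda>\<omega>. Fvec dJ \<phi> a (X \<omega>) (Y \<omega>)" and ?Fb = "\<lambda>\<omega>. Fvec dJ \<phi> b (X \<omega>) (Y \<omega>)"
  have ia: "integrable M ?Fa" and ib: "integrable M ?Fb"
    using integrable_Fvec a b by auto
  have "0 \<le> (\<integral>\<omega>. (?Fa \<omega> - ?Fb \<omega>) \<bullet> (a - b) \<partial>M)"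
    unfolding inner_Fvec_diff
  proof (rule Bochner_Integration.integral_nonneg)
    fix \<omega> assume "\<omega> \<in> space M"
    then show "0 \<le> (Fgame dJ (zvec \<phi> a (X \<omega>)) (Y \<omega>) - Fgame dJ (zvec \<phi> b (X \<omega>)) (Y \<omega>))
        \<bullet> (zvec \<phi> a (X \<omega>) - zvec \<phi> b (X \<omega>))"
      using A3_mono Y_in zvec_in_Zhat[OF a X_in] zvec_in_Zhat[OF b X_in] by blast
  qed
  also have "\<dots> = (\<integral>\<omega>. ?Fa \<omega> - ?Fb \<omega> \<partial>M) \<bullet> (a - b)"
    using ia ib by simp
  moreover have "bbF M X Y dJ \<phi> lam a - bbF M X Y dJ \<phi> lam b
      = (\<integral>\<omega>. ?Fa \<omega> - ?Fb \<omega> \<partial>M) + lam *\<^sub>R (a - b)"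
    unfolding bbF_def using ia ib by (simp add: algebra_simps)
  ultimately show "lam * (norm (a - b))^2 \<le> (bbF M X Y dJ \<phi> lam a - bbF M X Y dJ \<phi> lam b) \<bullet> (a - b)"
    by (simp add: inner_add_left power2_norm_eq_inner)
qed

lemma continuous_on_hbar: "continuous_on (cball 0 R) (hbar M X Y h \<phi> i)"
proof -
  obtain P where P: "\<forall>x\<in>Xs. norm (Phi_vec \<phi> x) \<le> P"
    using Phi_vec_bounded by blast
  have "(L_h * P)-lipschitz_on (cball 0 R) (\<lambda>c. h i (zhat \<phi> c (X \<omega>)) (Y \<omega>))"
    if \<omega>: "\<omega> \<in> space M" for \<omega>
  proof (rule lipschitz_onI)
    have L_h: "0 \<le> L_h"
      using lipschitz_on_nonneg[OF A2_h_lip[OF Y_in[OF \<omega>]]] .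
    then show "0 \<le> L_h * P"
      using P X_in[OF \<omega>] norm_ge_zero order_trans by (metis mult_nonneg_nonneg)
    fix c c' :: "real^'d" assume c: "c \<in> cball 0 R" and c': "c' \<in> cball 0 R"
    have "dist (h i (zhat \<phi> c (X \<omega>)) (Y \<omega>)) (h i (zhat \<phi> c' (X \<omega>)) (Y \<omega>))
        \<le> L_h * dist (zhat \<phi> c (X \<omega>)) (zhat \<phi> c' (X \<omega>))"
      using A2_h_lip[OF Y_in[OF \<omega>]] zhat_in_Zhat_i[OF c X_in[OF \<omega>]] zhat_in_Zhat_i[OF c' X_in[OF \<omega>]]
      by (rule lipschitz_onD)
    also have "\<dots> \<le> L_h * (norm (c - c') * P)"
    proof (rule mult_left_mono[OF _ L_h])
      have "dist (zhat \<phi> c (X \<omega>)) (zhat \<phi> c' (X \<omega>)) = \<bar>(c - c') \<bullet> Phi_vec \<phi> (X \<omega>)\<bar>"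
        unfolding zhat_inner dist_real_def by (simp add: inner_diff_left)
      also have "\<dots> \<le> norm (c - c') * norm (Phi_vec \<phi> (X \<omega>))"
        by (rule Cauchy_Schwarz_ineq2)
      also have "\<dots> \<le> norm (c - c') * P"
        using P X_in[OF \<omega>] by (intro mult_left_mono) auto
      finally show "dist (zhat \<phi> c (X \<omega>)) (zhat \<phi> c' (X \<omega>)) \<le> norm (c - c') * P" .
    qed
    finally show "dist (h i (zhat \<phi> c (X \<omega>)) (Y \<omega>)) (h i (zhat \<phi> c' (X \<omega>)) (Y \<omega>))
        \<le> L_h * P * dist c c'"
      by (simp add: dist_norm algebra_simps)
  qed
  then show ?thesis
    unfolding hbar_def[abs_def] by (intro lipschitz_on_continuous_on lipschitz_on_integral integrable_h)
qed

lemma convex_on_hbar: "convex_on (cball 0 R) (hbar M X Y h \<phi> i)"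
  unfolding hbar_def[abs_def]
proof (rule convex_on_integral[OF convex_cball integrable_h])
  fix \<omega> assume \<omega>: "\<omega> \<in> space M"
  have "linear (\<lambda>c. zhat \<phi> c (X \<omega>))"
    unfolding zhat_inner by (intro bounded_linear.linear bounded_linear_inner_left)
  moreover have "(\<lambda>c. zhat \<phi> c (X \<omega>)) ` cball 0 R \<subseteq> Zhat_i \<phi> R Xs"
    using zhat_in_Zhat_i X_in[OF \<omega>] by blast
  ultimately show "convex_on (cball 0 R) (\<lambda>c. h i (zhat \<phi> c (X \<omega>)) (Y \<omega>))"
    by (rule convex_on_linear_compose[OF A3_convex[OF Y_in[OF \<omega>]] _ convex_cball])
qed

lemma closed_bbA: "closed (bbA M X Y h \<phi> R)"
  unfolding bbA_eq_INT
  by (intro closed_INT ballI closed_vimage_vec_nth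
      continuous_on_closed_Collect_le[OF continuous_on_hbar continuous_on_const closed_cball])

lemma convex_bbA: "convex (bbA M X Y h \<phi> R)"
  unfolding bbA_eq_INT
  by (intro convex_INT convex_linear_vimage convex_on_sublevel_set[OF convex_on_hbar]
      bounded_linear.linear[OF bounded_linear_vec_nth])

end

theorem lemma4:
  fixes M :: "'w measure"
    and X :: "'w \<Rightarrow> 'x::euclidean_space" and Y :: "'w \<Rightarrow> 'y::euclidean_space"
    and Xs :: "'x set" and Ys :: "'y set"
    and \<phi> :: "'d::finite \<Rightarrow> 'x \<Rightarrow> real"
    and J dJ :: "'N::finite \<Rightarrow> real \<Rightarrow> 'y \<Rightarrow> real^'N \<Rightarrow> real"
    and h :: "'N \<Rightarrow> real \<Rightarrow> 'y \<Rightarrow> real"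
    and R lam L_F L_h :: real
    and a_star :: "real^'d^'N"
  assumes prob: "prob_space M"
    and X_meas: "X \<in> borel_measurable M" and Y_meas: "Y \<in> borel_measurable M"
    and Xs_compact: "compact Xs" and Ys_compact: "compact Ys"
    and X_in: "\<And>\<omega>. \<omega> \<in> space M \<Longrightarrow> X \<omega> \<in> Xs"
    and Y_in: "\<And>\<omega>. \<omega> \<in> space M \<Longrightarrow> Y \<omega> \<in> Ys"
    and \<phi>_cont: "\<And>l. continuous_on Xs (\<phi> l)"
    and R_pos: "R > 0" and lam_pos: "lam > 0"
    \<comment> \<open>the expectations defining bbF and hbar are well defined (measurable integrands)\<close>
    and F_meas: "\<And>a. (\<forall>i. a$i \<in> cball 0 R) \<Longrightarrow>
                   (\<lambda>\<omega>. Fvec dJ \<phi> a (X \<omega>) (Y \<omega>)) \<in> borel_measurable M"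
    and h_meas: "\<And>i c. c \<in> cball 0 R \<Longrightarrow>
                   (\<lambda>\<omega>. h i (zhat \<phi> c (X \<omega>)) (Y \<omega>)) \<in> borel_measurable M"
    \<comment> \<open>(A1)\<close>
    and A1_deriv: "\<And>i w y zo. y \<in> Ys \<Longrightarrow> ((\<lambda>v. J i v y zo) has_real_derivative dJ i w y zo) (at w)"
    and A1_cont: "\<And>i y zo. y \<in> Ys \<Longrightarrow> continuous_on UNIV (\<lambda>w. dJ i w y zo)"
    \<comment> \<open>(A2)\<close>
    and A2_F_lip: "\<And>y. y \<in> Ys \<Longrightarrow> lipschitz_on L_F (Zhat \<phi> R Xs) (\<lambda>z. Fgame dJ z y)"
    and A2_h_lip: "\<And>i y. y \<in> Ys \<Longrightarrow> lipschitz_on L_h (Zhat_i \<phi> R Xs) (\<lambda>w. h i w y)"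
    and A2_bdd: "\<exists>z\<in>Zhat \<phi> R Xs. bounded ((\<lambda>y. Fgame dJ z y) ` Ys) \<and>
                   (\<forall>i. bounded ((\<lambda>y. h i (z$i) y) ` Ys))"
    \<comment> \<open>(A3)\<close>
    and A3_mono: "\<And>y z z'. y \<in> Ys \<Longrightarrow> z \<in> Zhat \<phi> R Xs \<Longrightarrow> z' \<in> Zhat \<phi> R Xs \<Longrightarrow>
                   (Fgame dJ z y - Fgame dJ z' y) \<bullet> (z - z') \<ge> 0"
    and A3_convex: "\<And>i y. y \<in> Ys \<Longrightarrow> convex_on (Zhat_i \<phi> R Xs) (\<lambda>w. h i w y)"
    \<comment> \<open>a_star is the unique solution of VI(A, bbF)\<close>
    and a_star_sol: "VI_sol (bbA M X Y h \<phi> R) (bbF M X Y dJ \<phi> lam) a_star"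
    and a_star_unique: "\<And>b. VI_sol (bbA M X Y h \<phi> R) (bbF M X Y dJ \<phi> lam) b \<Longrightarrow> b = a_star"
  shows "isolated_zero (normal_map (bbA M X Y h \<phi> R) (bbF M X Y dJ \<phi> lam))
             (a_star - bbF M X Y dJ \<phi> lam a_star)
       \<and> zero_index (normal_map (bbA M X Y h \<phi> R) (bbF M X Y dJ \<phi> lam))
             (a_star - bbF M X Y dJ \<phi> lam a_star) = 1"
proof -
  interpret basis_expansion_game M X Y Xs Ys \<phi> dJ h R L_F L_h
    using prob Xs_compact X_in Y_in \<phi>_cont F_meas h_meas A2_F_lip A2_h_lip A2_bdd A3_mono A3_convex
    by (intro basis_expansion_game.intro basis_expansion_game_axioms.intro) auto
  let ?A = "bbA M X Y h \<phi> R" and ?F = "bbF M X Y dJ \<phi> lam"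
  have "continuous_on ?A ?F"
    using continuous_on_bbF bbA_subset_cball_profiles by (rule continuous_on_subset)
  moreover have "strongly_monotone_on lam ?A ?F"
    using strongly_monotone_bbF bbA_subset_cball_profiles by (rule strongly_monotone_on_subset)
  ultimately show ?thesis
    using closed_bbA convex_bbA lam_pos a_star_sol by (intro zero_index_normal_map_VI_sol)
qed

end
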